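(* Let $b\in\mathbb R$, $\omega>0$, $\mathcal B>0$, $y\in\mathbb R^2\setminus\{0\}$, $\eta\in\mathbb R^2$ with $y\wedge\eta\ne b$, and let $Z(t,y,\eta)=\xi^t_\eta-i\mathcal B\,x^t_\eta$. Then $Z$ is a non-degenerate matrix-function for all $t\ge0$. Moreover $$\det Z=\Big(\cos(\omega t)-i\mathcal B\omega^{-1}\sin(\omega t)\Big)^2-b^2\omega^{-2}|x^t|^{-4}\sin^2(\omega t),$$ and the eigenvalues of $Z$ are $$\mu_{1,2}=\cos(\omega t)-i\mathcal B\omega^{-1}\sin(\omega t)\pm b\,\omega^{-1}|x^t|^{-2}\sin(\omega t).$$
   Context: $A(x)=\big(-b\,x_2/|x|^2,\ b\,x_1/|x|^2\big)$ for $x\ne0$; $u\wedge v=u_1v_2-u_2v_1$. $(x^t,\xi^t)=(x^t(y,\eta),\xi^t(y,\eta))$ is the solution of Hamilton's equations for $h(x,\xi)=\frac12|\xi-A(x)|^2+\frac{\omega^2}{2}|x|^2$: $\dot x^t=\xi^t-A(x^t)$, $\dot\xi^t=-h_x(x^t,\xi^t)$, $x^0=y$, $\xi^0=\eta$; explicitly (the trajectory never meets the origin since $y\wedge\eta\ne b$) $x^t=\cos(\omega t)y+\frac{\sin(\omega t)}{\omega}(\eta-A(y))$, $\xi^t=\dot x^t+A(x^t)$. Here $x^t_\eta,\xi^t_\eta$ denote the $2\times2$ Jacobian matrices with respect to $\eta$. *)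

theory Defs
  imports "HOL-Analysis.Analysis"
begin

definition wedge :: "real^2 \<Rightarrow> real^2 \<Rightarrow> real" where
  "wedge u v = u$1 * v$2 - u$2 * v$1"

definition Apot :: "real \<Rightarrow> real^2 \<Rightarrow> real^2" where
  "Apot b x = vector [- b * x$2 / (norm x)^2, b * x$1 / (norm x)^2]"

definition xt :: "real \<Rightarrow> real \<Rightarrow> real \<Rightarrow> real^2 \<Rightarrow> real^2 \<Rightarrow> real^2" where
  "xt b \<omega> t y \<eta> = cos (\<omega> * t) *\<^sub>R y + (sin (\<omega> * t) / \<omega>) *\<^sub>R (\<eta> - Apot b y)"

definition xit :: "real \<Rightarrow> real \<Rightarrow> real \<Rightarrow> real^2 \<Rightarrow> real^2 \<Rightarrow> real^2" where
  "xit b \<omega> t y \<eta> = vector_derivative (\<lambda>s. xt b \<omega> s y \<eta>) (at t) + Apot b (xt b \<omega> t y \<eta>)"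

definition Zmat :: "real \<Rightarrow> real \<Rightarrow> real \<Rightarrow> real \<Rightarrow> real^2 \<Rightarrow> real^2 \<Rightarrow> complex^2^2" where
  "Zmat b \<omega> B t y \<eta> =
     (\<chi> i j. complex_of_real (jacobian (\<lambda>e. xit b \<omega> t y e) (at \<eta>) $ i $ j)
              - \<i> * complex_of_real B * complex_of_real (jacobian (\<lambda>e. xt b \<omega> t y e) (at \<eta>) $ i $ j))"

end

theory Submission
  imports Defs
begin

text \<open>
  The flow is affine in \<open>\<eta>\<close> with slope \<open>sin(\<omega>t)/\<omega>\<close>, so
  \<open>x\<^sup>t\<^sub>\<eta> = sin(\<omega>t)/\<omega> I\<close> and \<open>\<xi>\<^sup>t\<^sub>\<eta> = cos(\<omega>t) I + sin(\<omega>t)/\<omega> A'(x\<^sup>t)\<close>; hence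
  \<open>Z = \<alpha> I + sin(\<omega>t)/\<omega> A'(x\<^sup>t)\<close> with \<open>\<alpha> = cos(\<omega>t) - i B/\<omega> sin(\<omega>t)\<close>.
  The Jacobian \<open>A'(x)\<close> of the potential is traceless with determinant \<open>-b\<^sup>2/|x|\<^sup>4\<close>, so
  \<open>Z\<close> has eigenvalues \<open>\<alpha> \<plusminus> b/\<omega> |x\<^sup>t|\<^sup>-\<^sup>2 sin(\<omega>t)\<close>. They have imaginary part
  \<open>-B/\<omega> sin(\<omega>t)\<close>, and when \<open>sin(\<omega>t) = 0\<close> both equal \<open>cos(\<omega>t) = \<plusminus>1\<close>, so
  \<open>det Z \<noteq> 0\<close>. The trajectory avoids the origin because
  \<open>wedge y (\<eta> - A(y)) = wedge y \<eta> - b \<noteq> 0\<close>: \<open>x\<^sup>t = 0\<close> would force \<open>sin(\<omega>t) = 0\<close> and then \<open>x\<^sup>t = \<plusminus>y\<close>.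
\<close>

lemma inner_vec2: "(x::real^2) \<bullet> y = x$1 * y$1 + x$2 * y$2"
  by (simp add: inner_vec_def sum_2)

lemma jacobian_eqI:
  fixes f :: "real^'n \<Rightarrow> real^'m"
  assumes "(f has_derivative (\<lambda>h. M *v h)) (at x)"
  shows "jacobian f (at x) = M"
proof -
  have "frechet_derivative f (at x) = (\<lambda>h. M *v h)"
    using frechet_derivative_at[OF assms] by simp
  then show ?thesis
    by (simp add: jacobian_def)
qed

lemma matrix_vector_mul_mat: "mat c *v x = c *s (x::'a::semiring_1^'n)"
  by (simp add: vec_eq_iff matrix_vector_mult_def mat_def if_distrib[where f="\<lambda>a. a * _"] cong: if_cong)

lemma eigenvalue_iff_det_eq_0:
  fixes A :: "'a::field^'n^'n"
  shows "(\<exists>v. v \<noteq> 0 \<and> A *v v = \<mu> *s v) \<longleftrightarrow> det (A - mat \<mu>) = 0"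
proof -
  have "A *v v = \<mu> *s v \<longleftrightarrow> (A - mat \<mu>) *v v = 0" for v
    by (simp add: matrix_vector_mult_diff_rdistrib matrix_vector_mul_mat)
  moreover have "det (A - mat \<mu>) \<noteq> 0 \<longleftrightarrow> (\<forall>v. (A - mat \<mu>) *v v = 0 \<longrightarrow> v = 0)"
    using det_nz_iff_inj_gen[OF matrix_vector_mul_linear_gen]
      vec.linear_inj_iff_eq_0[OF matrix_vector_mul_linear_gen]
    by (metis matrix_of_matrix_vector_mul)
  ultimately show ?thesis
    by blast
qed

lemma det_2_mat_add_traceless:
  fixes D :: "'a::comm_ring_1^2^2"
  assumes "trace D = 0"
  shows "det (mat a + D) = a^2 + det D"
proof -
  have "D$2$2 = - D$1$1"
    using assms by (simp add: trace_def UNIV_2 eq_neg_iff_add_eq_0 add.commute)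
  then show ?thesis
    by (simp add: det_2 mat_def algebra_simps power2_eq_square)
qed

lemma eigenvalues_2_mat_add_traceless:
  fixes D :: "'a::field^2^2"
  assumes "trace D = 0" and "det D = - (k^2)"
  shows "{\<mu>. \<exists>v. v \<noteq> 0 \<and> (mat a + D) *v v = \<mu> *s v} = {a + k, a - k}"
proof -
  have "det (mat a + D - mat \<mu>) = (a - \<mu>)^2 - k^2" for \<mu>
  proof -
    have "mat a + D - mat \<mu> = mat (a - \<mu>) + D"
      by (simp add: vec_eq_iff mat_def)
    then show ?thesis
      using det_2_mat_add_traceless[OF assms(1), of "a - \<mu>"] assms(2) by (simp only:) simp
  qed
  then have "(\<exists>v. v \<noteq> 0 \<and> (mat a + D) *v v = \<mu> *s v) \<longleftrightarrow> (a - \<mu>)^2 = k^2" for \<mu>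
    by (simp add: eigenvalue_iff_det_eq_0)
  then show ?thesis
    by (auto simp: power2_eq_iff algebra_simps)
qed

lemma complex_power2_neq_of_real_power2:
  fixes z :: complex
  assumes "Im z \<noteq> 0 \<or> (z \<noteq> 0 \<and> k = 0)"
  shows "z^2 \<noteq> (of_real k)^2"
proof
  assume "z^2 = (of_real k)^2"
  then have "z = of_real k \<or> z = - of_real k"
    by (simp add: power2_eq_iff)
  then show False
    using assms by auto
qed

definition rot90 :: "real^2 \<Rightarrow> real^2" where
  "rot90 x = vector [- x$2, x$1]"

lemma linear_rot90: "linear rot90"
  unfolding rot90_def by (rule linearI) (auto simp: vec_eq_iff forall_2)

lemma Apot_eq_scaleR_rot90: "Apot b x = (b / (x \<bullet> x)) *\<^sub>R rot90 x"
  by (simp add: Apot_def rot90_def vec_eq_iff forall_2 power2_norm_eq_inner)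

lemma wedge_scaleR_right: "wedge x (c *\<^sub>R v) = c * wedge x v"
  by (simp add: wedge_def algebra_simps)

lemma wedge_Apot:
  assumes "x \<noteq> 0"
  shows "wedge x (Apot b x) = b"
proof -
  have "wedge x (rot90 x) = x \<bullet> x"
    by (simp add: wedge_def rot90_def inner_vec2)
  then show ?thesis
    using assms by (simp add: Apot_eq_scaleR_rot90 wedge_scaleR_right)
qed

lemma xt_nonzero:
  assumes "\<omega> \<noteq> 0" "y \<noteq> 0" "wedge y \<eta> \<noteq> b"
  shows "xt b \<omega> t y \<eta> \<noteq> 0"
proof
  assume x0: "xt b \<omega> t y \<eta> = 0"
  define v where "v = \<eta> - Apot b y"
  have "wedge y v \<noteq> 0"
    using wedge_Apot[OF assms(2), of b] assms(3) by (simp add: v_def wedge_def algebra_simps)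
  moreover have "sin (\<omega> * t) / \<omega> * wedge y v = wedge y (xt b \<omega> t y \<eta>)"
    by (simp add: xt_def v_def wedge_def algebra_simps)
  ultimately have "sin (\<omega> * t) = 0"
    using x0 assms(1) by (simp add: wedge_def)
  then have "cos (\<omega> * t) \<noteq> 0"
    using sin_cos_squared_add[of "\<omega> * t"] by auto
  then show False
    using x0 assms(2) \<open>sin (\<omega> * t) = 0\<close> by (simp add: xt_def)
qed

definition Apot_jacobian :: "real \<Rightarrow> real^2 \<Rightarrow> real^2^2" where
  "Apot_jacobian b x = (b / (x \<bullet> x)^2) *\<^sub>R
     vector [vector [2 * x$1 * x$2, x$2^2 - x$1^2], vector [x$2^2 - x$1^2, - 2 * x$1 * x$2]]"

lemma has_derivative_Apot:
  assumes "x \<noteq> 0"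
  shows "(Apot b has_derivative (\<lambda>h. Apot_jacobian b x *v h)) (at x)"
proof -
  have "x \<bullet> x \<noteq> 0"
    using assms by simp
  have "((\<lambda>x. (b / (x \<bullet> x)) *\<^sub>R rot90 x) has_derivative
      (\<lambda>h. (- 2 * b * (x \<bullet> h) / (x \<bullet> x)^2) *\<^sub>R rot90 x + (b / (x \<bullet> x)) *\<^sub>R rot90 h)) (at x)"
    using \<open>x \<bullet> x \<noteq> 0\<close>
    by (auto intro!: derivative_eq_intros bounded_linear.has_derivative[OF linear_rot90[unfolded linear_conv_bounded_linear]]
        simp: power2_eq_square inner_commute)
  moreover have "(- 2 * b * (x \<bullet> h) / (x \<bullet> x)^2) *\<^sub>R rot90 x + (b / (x \<bullet> x)) *\<^sub>R rot90 h
      = Apot_jacobian b x *v h" for h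
  proof -
    have "(b / (x \<bullet> x)) = b * (x \<bullet> x) / (x \<bullet> x)^2"
      using \<open>x \<bullet> x \<noteq> 0\<close> by (simp add: power2_eq_square)
    then show ?thesis
      unfolding inner_vec2
      by (simp add: vec_eq_iff forall_2 Apot_jacobian_def rot90_def inner_vec2 matrix_vector_mult_def sum_2
          add_divide_distrib[symmetric] diff_divide_distrib[symmetric]) (simp add: algebra_simps power2_eq_square)
  qed
  ultimately show ?thesis
    by (simp add: Apot_eq_scaleR_rot90[abs_def])
qed

lemma trace_Apot_jacobian: "trace (Apot_jacobian b x) = 0"
  by (simp add: trace_def UNIV_2 Apot_jacobian_def)

lemma det_Apot_jacobian: "det (Apot_jacobian b x) = - ((b / (x \<bullet> x))^2)"
proof -
  have "det (Apot_jacobian b x) = (b / (x \<bullet> x)^2)^2 * - ((2 * x$1 * x$2)^2 + (x$2^2 - x$1^2)^2)"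
    by (simp add: det_2 Apot_jacobian_def algebra_simps power2_eq_square)
  also have "(2 * x$1 * x$2)^2 + (x$2^2 - x$1^2)^2 = (x \<bullet> x)^2"
    by (simp add: inner_vec2 algebra_simps power2_eq_square)
  finally show ?thesis
    by (cases "x = 0") (simp_all add: power_divide power4_eq_xxxx power2_eq_square)
qed

lemma has_derivative_xt:
  "((\<lambda>e. xt b \<omega> t y e) has_derivative (\<lambda>h. mat (sin (\<omega> * t) / \<omega>) *v h)) (at \<eta>)"
  unfolding xt_def
  by (auto intro!: derivative_eq_intros simp: matrix_vector_mul_mat scalar_mult_eq_scaleR)

lemma xit_eq:
  assumes "\<omega> \<noteq> 0"
  shows "xit b \<omega> t y \<eta> =
    (- \<omega> * sin (\<omega> * t)) *\<^sub>R y + cos (\<omega> * t) *\<^sub>R (\<eta> - Apot b y) + Apot b (xt b \<omega> t y \<eta>)"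
proof -
  have "((\<lambda>s. xt b \<omega> s y \<eta>) has_vector_derivative
      (- \<omega> * sin (\<omega> * t)) *\<^sub>R y + cos (\<omega> * t) *\<^sub>R (\<eta> - Apot b y)) (at t)"
    unfolding xt_def using assms
    by (auto intro!: derivative_eq_intros simp: algebra_simps)
  then show ?thesis
    by (simp add: xit_def vector_derivative_at)
qed

lemma has_derivative_xit:
  assumes "\<omega> \<noteq> 0" and "xt b \<omega> t y \<eta> \<noteq> 0"
  shows "((\<lambda>e. xit b \<omega> t y e) has_derivative
    (\<lambda>h. (mat (cos (\<omega> * t)) + (sin (\<omega> * t) / \<omega>) *\<^sub>R Apot_jacobian b (xt b \<omega> t y \<eta>)) *v h)) (at \<eta>)"
proof -
  have "((\<lambda>e. Apot b (xt b \<omega> t y e)) has_derivative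
      (\<lambda>h. Apot_jacobian b (xt b \<omega> t y \<eta>) *v (mat (sin (\<omega> * t) / \<omega>) *v h))) (at \<eta>)"
    using diff_chain_at[OF has_derivative_xt has_derivative_Apot[OF assms(2)]] by (simp add: o_def)
  then show ?thesis
    unfolding xit_eq[OF assms(1), abs_def]
    by (auto intro!: derivative_eq_intros
        simp: algebra_simps matrix_vector_mul_mat scalar_mult_eq_scaleR scaleR_matrix_vector_assoc)
qed

lemma Zmat_eq:
  fixes b \<omega> B t :: real
  assumes "\<omega> \<noteq> 0" and "xt b \<omega> t y \<eta> \<noteq> 0"
  shows "Zmat b \<omega> B t y \<eta> = mat (cos (\<omega> * t) - \<i> * B / \<omega> * sin (\<omega> * t)) +
    (\<chi> i j. of_real (sin (\<omega> * t) / \<omega> * Apot_jacobian b (xt b \<omega> t y \<eta>) $ i $ j))"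
  unfolding Zmat_def jacobian_eqI[OF has_derivative_xt] jacobian_eqI[OF has_derivative_xit[OF assms]]
  by (simp add: vec_eq_iff mat_def algebra_simps)

theorem proposition3p3:
  fixes b \<omega> B t :: real and y \<eta> :: "real^2"
  assumes "\<omega> > 0" and "B > 0" and "y \<noteq> 0" and "wedge y \<eta> \<noteq> b" and "t \<ge> 0"
  shows "det (Zmat b \<omega> B t y \<eta>) \<noteq> 0
    \<and> det (Zmat b \<omega> B t y \<eta>) =
        (cos (\<omega> * t) - \<i> * B / \<omega> * sin (\<omega> * t))^2
        - b^2 / \<omega>^2 / (norm (xt b \<omega> t y \<eta>))^4 * (sin (\<omega> * t))^2
    \<and> {\<mu>. \<exists>v. v \<noteq> 0 \<and> Zmat b \<omega> B t y \<eta> *v v = \<mu> *s v} =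
        {cos (\<omega> * t) - \<i> * B / \<omega> * sin (\<omega> * t) + b / \<omega> / (norm (xt b \<omega> t y \<eta>))^2 * sin (\<omega> * t),
         cos (\<omega> * t) - \<i> * B / \<omega> * sin (\<omega> * t) - b / \<omega> / (norm (xt b \<omega> t y \<eta>))^2 * sin (\<omega> * t)}"
proof -
  have "\<omega> \<noteq> 0"
    using assms(1) by simp
  define x where "x = xt b \<omega> t y \<eta>"
  have "x \<noteq> 0"
    unfolding x_def using xt_nonzero \<open>\<omega> \<noteq> 0\<close> assms(3,4) .
  define \<alpha> where "\<alpha> = cos (\<omega> * t) - \<i> * B / \<omega> * sin (\<omega> * t)"
  define k where "k = b / \<omega> / (norm x)^2 * sin (\<omega> * t)"
  define D :: "complex^2^2" where "D = (\<chi> i j. of_real (sin (\<omega> * t) / \<omega> * Apot_jacobian b x $ i $ j))"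
  have Z: "Zmat b \<omega> B t y \<eta> = mat \<alpha> + D"
    unfolding \<alpha>_def D_def x_def using Zmat_eq \<open>\<omega> \<noteq> 0\<close> \<open>x \<noteq> 0\<close>[unfolded x_def] .
  have "trace D = of_real (sin (\<omega> * t) / \<omega> * trace (Apot_jacobian b x))"
    by (simp add: D_def trace_def UNIV_2 algebra_simps)
  then have trD: "trace D = 0"
    by (simp add: trace_Apot_jacobian)
  have "det D = of_real ((sin (\<omega> * t) / \<omega>)^2 * det (Apot_jacobian b x))"
    by (simp add: D_def det_2 algebra_simps power2_eq_square)
  then have detD: "det D = - ((of_real k)^2)"
    by (simp add: det_Apot_jacobian k_def power2_norm_eq_inner power_divide power_mult_distrib)
  have "\<alpha>^2 \<noteq> (of_real k)^2"
  proof (rule complex_power2_neq_of_real_power2)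
    have "sin (\<omega> * t) = 0 \<Longrightarrow> cos (\<omega> * t) \<noteq> 0"
      using sin_cos_squared_add[of "\<omega> * t"] by auto
    then show "Im \<alpha> \<noteq> 0 \<or> (\<alpha> \<noteq> 0 \<and> k = 0)"
      using assms(1,2) by (auto simp: \<alpha>_def k_def)
  qed
  moreover have "complex_of_real k = b / \<omega> / (norm x)^2 * sin (\<omega> * t)"
    by (simp add: k_def)
  ultimately show ?thesis
    using det_2_mat_add_traceless[OF trD, of \<alpha>] eigenvalues_2_mat_add_traceless[OF trD detD, of \<alpha>]
    by (simp add: Z detD x_def[symmetric] \<alpha>_def power_divide power_mult_distrib flip: power_mult)
qed

end
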